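(* Let $\mathbf{f} = (f_n)_{n\ge 1}$ be the ordinary paperfolding word over $\{0,1\}$, and let $\rho(n)$ denote its abelian complexity function (with $\rho(0)=1$). Then the sequence $(\rho(n))_{n\ge 0}$ is $2$-regular.
   Context: The ordinary paperfolding word $\mathbf{f}=(f_n)_{n\ge1}$ over $\{0,1\}$ is defined as follows: for $n\ge 1$ write $n=n'2^k$ with $n'$ odd; then $f_n=0$ if $n'\equiv 1 \pmod 4$ and $f_n=1$ if $n'\equiv 3\pmod 4$. Thus $\mathbf{f}=0010011000110110\cdots$. A factor of $\mathbf{f}$ is a finite contiguous block $f_i f_{i+1}\cdots f_{i+n-1}$. Two words $u,v$ over $\{0,1\}$ are abelian equivalent if one is a rearrangement of the other (equivalently, they have the same length and the same number of $0$'s). The abelian complexity $\rho(n)$ is the number of abelian equivalence classes among the factors of $\mathbf{f}$ of length $n$ (so $\rho(0)=1$). For an integer $k\ge2$ and an integer sequence $\mathbf{w}=(w(n))_{n\ge0}$, the $k$-kernel of $\mathbf{w}$ is the set of sequences $\{(w(k^e n+c))_{n\ge0} : e\ge0,\ 0\le c<k^e\}$; $\mathbf{w}$ is $k$-regular if the $\mathbb{Z}$-module generated by its $k$-kernel (together with the constant sequence $(1)_{n\ge0}$) is finitely generated. *)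

theory Defs
  imports Main "HOL-Library.Multiset"
begin

fun oddpart :: "nat \<Rightarrow> nat" where
  "oddpart n = (if n = 0 then 0 else if even n then oddpart (n div 2) else n)"

text \<open>Ordinary paperfolding word, f n for n \<ge> 1 (value at 0 is irrelevant/unused).\<close>
definition paperfold :: "nat \<Rightarrow> nat" where
  "paperfold n = (if oddpart n mod 4 = 1 then 0 else 1)"

definition pf_factor :: "nat \<Rightarrow> nat \<Rightarrow> nat list" where
  "pf_factor i n = map paperfold [i..<i+n]"

definition abelian_equiv :: "'a list \<Rightarrow> 'a list \<Rightarrow> bool" where
  "abelian_equiv u v \<longleftrightarrow> mset u = mset v"

definition pf_abelian_complexity :: "nat \<Rightarrow> nat" where
  "pf_abelian_complexity n =
     card ({pf_factor i n | i. i \<ge> 1} // {(u, v). abelian_equiv u v})"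

definition int_span :: "(nat \<Rightarrow> int) set \<Rightarrow> (nat \<Rightarrow> int) set" where
  "int_span S = {h. \<exists>F c. finite F \<and> F \<subseteq> S \<and> h = (\<lambda>n. \<Sum>g\<in>F. c g * g n)}"

definition k_kernel :: "nat \<Rightarrow> (nat \<Rightarrow> int) \<Rightarrow> (nat \<Rightarrow> int) set" where
  "k_kernel k w = {(\<lambda>n. w (k ^ e * n + c)) | e c. c < k ^ e}"

definition k_regular :: "nat \<Rightarrow> (nat \<Rightarrow> int) \<Rightarrow> bool" where
  "k_regular k w \<longleftrightarrow>
     (\<exists>G. finite G \<and> int_span G = int_span (insert (\<lambda>_. 1) (k_kernel k w)))"

end

theory Submission
  imports Defs
begin

text \<open>With signs \<open>1 - 2 f\<^sub>j\<close>, the partial sums of the paperfolding word count the maximal blocks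
  of equal digits in binary expansions. Hence the balance (number of \<open>0\<close>s minus number of
  \<open>1\<close>s) of a factor is a difference of two block counts, and a factor's abelian class is
  determined by its balance. For fixed length \<open>n\<close> the balances change by at most \<open>2\<close> from one
  position to the next, have constant parity and are symmetric about \<open>0\<close> (complement the binary
  digits), so they fill \<open>{-M, 2 - M, \<dots>, M}\<close> and \<open>\<rho>(n) = M + 1\<close> for the maximal balance
  \<open>M\<close>. Comparing block counts digit by digit, with a carry, computes \<open>M\<close> by a max-plus
  automaton reading the binary digits of \<open>n\<close>; up to translation it has only twelve state
  vectors. Checking finitely many identities on them yields linear recurrences for \<open>\<rho>\<close>, which
  close eight sequences of the \<open>2\<close>-kernel under \<open>n \<mapsto> 2n, 2n + 1\<close> up to constants.\<close>

section \<open>Integer spans and a criterion for regularity\<close>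

lemma int_span_base: "g \<in> S \<Longrightarrow> g \<in> int_span S"
  unfolding int_span_def by (intro CollectI exI[of _ "{g}"] exI[of _ "\<lambda>_. 1"]) simp

lemma int_span_zero: "(\<lambda>_. 0) \<in> int_span S"
  unfolding int_span_def by (intro CollectI exI[of _ "{}"]) simp

lemma int_span_add:
  assumes "f \<in> int_span S" "g \<in> int_span S"
  shows "(\<lambda>n. f n + g n) \<in> int_span S"
proof -
  obtain F c where F: "finite F" "F \<subseteq> S" "f = (\<lambda>n. \<Sum>h\<in>F. c h * h n)"
    using assms(1) unfolding int_span_def by blast
  obtain F' c' where F': "finite F'" "F' \<subseteq> S" "g = (\<lambda>n. \<Sum>h\<in>F'. c' h * h n)"
    using assms(2) unfolding int_span_def by blast
  define d where "d h = (if h \<in> F then c h else 0) + (if h \<in> F' then c' h else 0)" for h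
  have "f n + g n = (\<Sum>h\<in>F \<union> F'. d h * h n)" for n
  proof -
    have "(\<Sum>h\<in>F \<union> F'. (if h \<in> F then c h else 0) * h n) = (\<Sum>h\<in>F. c h * h n)"
      by (rule sum.mono_neutral_cong_right) (use F F' in auto)
    moreover have "(\<Sum>h\<in>F \<union> F'. (if h \<in> F' then c' h else 0) * h n) = (\<Sum>h\<in>F'. c' h * h n)"
      by (rule sum.mono_neutral_cong_right) (use F F' in auto)
    ultimately show ?thesis
      unfolding d_def distrib_right sum.distrib F(3) F'(3) by simp
  qed
  then have "(\<lambda>n. f n + g n) = (\<lambda>n. \<Sum>h\<in>F \<union> F'. d h * h n)" by (rule ext)
  then show ?thesis unfolding int_span_def using F F' by blast
qed

lemma int_span_scale:
  assumes "f \<in> int_span S"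
  shows "(\<lambda>n. a * f n) \<in> int_span S"
proof -
  obtain F c where F: "finite F" "F \<subseteq> S" "f = (\<lambda>n. \<Sum>h\<in>F. c h * h n)"
    using assms unfolding int_span_def by blast
  have "(\<lambda>n. a * f n) = (\<lambda>n. \<Sum>h\<in>F. (a * c h) * h n)"
    unfolding F(3) sum_distrib_left mult.assoc ..
  then show ?thesis unfolding int_span_def using F(1,2)
    by (intro CollectI exI[of _ F] exI[of _ "\<lambda>h. a * c h"]) simp
qed

lemma int_span_subset_int_span:
  assumes "S \<subseteq> int_span T"
  shows "int_span S \<subseteq> int_span T"
proof
  fix f assume "f \<in> int_span S"
  then obtain F c where F: "finite F" "F \<subseteq> S" "f = (\<lambda>n. \<Sum>h\<in>F. c h * h n)"
    unfolding int_span_def by blast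
  have "(\<lambda>n. \<Sum>h\<in>F'. c h * h n) \<in> int_span T" if "finite F'" "F' \<subseteq> S" for F'
    using that
  proof (induction F' rule: finite_induct)
    case empty
    then show ?case using int_span_zero by simp
  next
    case (insert h F')
    then show ?case
      using int_span_add[OF int_span_scale[of h T "c h"]] assms by auto
  qed
  then show "f \<in> int_span T" using F by blast
qed

definition differ_by_constant :: "(nat \<Rightarrow> int) \<Rightarrow> (nat \<Rightarrow> int) \<Rightarrow> bool" where
  "differ_by_constant f g \<longleftrightarrow> (\<exists>j. \<forall>n. f n = g n + j)"

lemma differ_by_constant_refl [simp]: "differ_by_constant f f"
  unfolding differ_by_constant_def by (intro exI[of _ 0]) simp

lemma differ_by_constant_trans:
  "differ_by_constant f g \<Longrightarrow> differ_by_constant g h \<Longrightarrow> differ_by_constant f h"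
  unfolding differ_by_constant_def by (metis add.assoc)

lemma differ_by_constant_compose:
  "differ_by_constant f g \<Longrightarrow> differ_by_constant (\<lambda>n. f (s n)) (\<lambda>n. g (s n))"
  unfolding differ_by_constant_def by blast

lemma differ_by_constant_in_int_span:
  assumes "differ_by_constant f g" "g \<in> int_span S" "(\<lambda>_. 1) \<in> S"
  shows "f \<in> int_span S"
proof -
  obtain j where j: "\<And>n. f n = g n + j" using assms(1) unfolding differ_by_constant_def by blast
  have "(\<lambda>n. g n + j * 1) \<in> int_span S"
    using int_span_add[OF assms(2) int_span_scale[OF int_span_base[OF assms(3)]]] .
  moreover have "f = (\<lambda>n. g n + j * 1)" using j by auto
  ultimately show ?thesis by simp
qed

lemma kernel_sequence_differ_by_constant_if_closed:
  fixes k :: nat and w :: "nat \<Rightarrow> int" and P :: "(nat \<times> nat) set"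
  defines "sub e c \<equiv> \<lambda>n. w (k ^ e * n + c)"
  assumes "(0, 0) \<in> P"
    and closed: "\<And>e c b. (e, c) \<in> P \<Longrightarrow> b < k \<Longrightarrow>
      \<exists>e' c'. (e', c') \<in> P \<and> differ_by_constant (sub (Suc e) (k ^ e * b + c)) (sub e' c')"
    and "c < k ^ e"
  shows "\<exists>e' c'. (e', c') \<in> P \<and> differ_by_constant (sub e c) (sub e' c')"
  using \<open>c < k ^ e\<close>
proof (induction e arbitrary: c)
  case 0
  then show ?case using \<open>(0, 0) \<in> P\<close> by (intro exI[of _ 0]) simp
next
  case (Suc e)
  define b where "b = c div k ^ e"
  define c0 where "c0 = c mod k ^ e"
  have "b < k" using Suc.prems unfolding b_def by (simp add: less_mult_imp_div_less)
  have "c0 < k ^ e" unfolding c0_def using Suc.prems by (cases "k = 0") auto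
  then obtain e1 c1 where P1: "(e1, c1) \<in> P" and d1: "differ_by_constant (sub e c0) (sub e1 c1)"
    using Suc.IH by blast
  obtain e2 c2 where P2: "(e2, c2) \<in> P"
    and d2: "differ_by_constant (sub (Suc e1) (k ^ e1 * b + c1)) (sub e2 c2)"
    using closed[OF P1 \<open>b < k\<close>] by blast
  have digits: "k ^ Suc e * n + c = k ^ e * (k * n + b) + c0" for n
    unfolding b_def c0_def by (simp add: algebra_simps)
  have "sub (Suc e) c = (\<lambda>n. sub e c0 (k * n + b))"
    unfolding sub_def by (simp only: digits)
  moreover have "sub (Suc e1) (k ^ e1 * b + c1) = (\<lambda>n. sub e1 c1 (k * n + b))"
    unfolding sub_def by (rule ext) (simp add: algebra_simps)
  ultimately have "differ_by_constant (sub (Suc e) c) (sub (Suc e1) (k ^ e1 * b + c1))"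
    using differ_by_constant_compose[OF d1] by simp
  then show ?case using differ_by_constant_trans[OF _ d2] P2 by blast
qed

lemma k_regular_if_kernel_closed_up_to_constants:
  fixes k :: nat and w :: "nat \<Rightarrow> int" and P :: "(nat \<times> nat) set"
  defines "sub e c \<equiv> \<lambda>n. w (k ^ e * n + c)"
  assumes "finite P" and "(0, 0) \<in> P" and "\<And>e c. (e, c) \<in> P \<Longrightarrow> c < k ^ e"
    and closed: "\<And>e c b. (e, c) \<in> P \<Longrightarrow> b < k \<Longrightarrow>
      \<exists>e' c'. (e', c') \<in> P \<and> differ_by_constant (sub (Suc e) (k ^ e * b + c)) (sub e' c')"
  shows "k_regular k w"
proof -
  define G where "G = insert (\<lambda>_. 1) ((\<lambda>(e, c). sub e c) ` P)"
  define K where "K = insert (\<lambda>_. 1) (k_kernel k w)"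
  have "sub e c \<in> K" if "(e, c) \<in> P" for e c
    using assms(4)[OF that] unfolding K_def k_kernel_def sub_def by blast
  moreover have "(\<lambda>_. 1) \<in> K" unfolding K_def by simp
  ultimately have "G \<subseteq> K" unfolding G_def by auto
  then have "int_span G \<subseteq> int_span K"
    using int_span_base int_span_subset_int_span by blast
  moreover have "K \<subseteq> int_span G"
  proof
    fix f assume "f \<in> K"
    then consider "f = (\<lambda>_. 1)" | e c where "c < k ^ e" "f = sub e c"
      unfolding K_def k_kernel_def sub_def by blast
    then show "f \<in> int_span G"
    proof cases
      case 1
      then show ?thesis unfolding G_def by (auto intro: int_span_base)
    next
      case 2
      then obtain e' c' where "(e', c') \<in> P" "differ_by_constant f (sub e' c')"
        using kernel_sequence_differ_by_constant_if_closed[OF \<open>(0, 0) \<in> P\<close> closed[unfolded sub_def]]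
        unfolding sub_def by blast
      then show ?thesis
        by (intro differ_by_constant_in_int_span[OF _ int_span_base]) (auto simp: G_def)
    qed
  qed
  then have "int_span K \<subseteq> int_span G" by (rule int_span_subset_int_span)
  moreover have "finite G" unfolding G_def using assms(2) by simp
  ultimately show ?thesis unfolding k_regular_def K_def by blast
qed

section \<open>Sequences moving in steps of at most two\<close>

lemma two_step_sequence_hits_upward:
  fixes f :: "nat \<Rightarrow> int"
  assumes step: "\<And>z. \<bar>f (Suc z) - f z\<bar> \<le> 2" and parity: "\<And>z. even (f z - t)"
    and "f a \<le> t" "t \<le> f (a + k)"
  shows "\<exists>z. f z = t"
  using \<open>t \<le> f (a + k)\<close>
proof (induction k)
  case 0
  then show ?case using \<open>f a \<le> t\<close> by (intro exI[of _ a]) simp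
next
  case (Suc k)
  show ?case
  proof (cases "t \<le> f (a + k)")
    case True
    then show ?thesis using Suc.IH by blast
  next
    case False
    have "\<bar>f (Suc (a + k)) - f (a + k)\<bar> \<le> 2" "even (f (a + k) - t)" "even (f (Suc (a + k)) - t)"
      using step parity by blast+
    then have "f (Suc (a + k)) = t" using False Suc.prems by (simp add: abs_le_iff) presburger
    then show ?thesis ..
  qed
qed

lemma two_step_sequence_hits_between:
  fixes f :: "nat \<Rightarrow> int"
  assumes step: "\<And>z. \<bar>f (Suc z) - f z\<bar> \<le> 2" and parity: "\<And>z. even (f z - t)"
    and "f a \<le> t" "t \<le> f b"
  shows "\<exists>z. f z = t"
proof (cases "a \<le> b")
  case True
  then show ?thesis
    using two_step_sequence_hits_upward[OF step parity \<open>f a \<le> t\<close>, of "b - a"] \<open>t \<le> f b\<close> by simp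
next
  case False
  have "\<bar>- f (Suc z) - - f z\<bar> \<le> 2" "even (- f z - - t)" for z
    using step[of z] parity[of z] by (simp_all add: abs_minus_commute)
  moreover have "- f b \<le> - t" "- t \<le> - f (b + (a - b))"
    using False \<open>f a \<le> t\<close> \<open>t \<le> f b\<close> by simp_all
  ultimately have "\<exists>z. - f z = - t"
    by (rule two_step_sequence_hits_upward[of "\<lambda>z. - f z"])
  then show ?thesis by simp
qed

lemma range_two_step_symmetric:
  fixes f :: "nat \<Rightarrow> int"
  assumes step: "\<And>z. \<bar>f (Suc z) - f z\<bar> \<le> 2"
    and parity: "\<And>z z'. even (f z - f z')"
    and symmetric: "\<And>z. \<exists>z'. f z' = - f z"
    and bound: "\<And>z. f z \<le> M" and attained: "f z0 = M"
  shows "range f = (\<lambda>i. 2 * int i - M) ` {0..nat M}"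
proof -
  obtain z1 where z1: "f z1 = - M" using symmetric[of z0] attained by auto
  show ?thesis
  proof (intro equalityI subsetI)
    fix d assume "d \<in> range f"
    then obtain z where z: "f z = d" by blast
    obtain z' where "f z' = - d" using symmetric z by blast
    then have "- M \<le> d" "d \<le> M" using bound[of z'] bound[of z] z by auto
    moreover have "even (d + M)" using parity[of z z1] z z1 by simp
    ultimately have "d = 2 * int (nat ((d + M) div 2)) - M" "nat ((d + M) div 2) \<in> {0..nat M}"
      by auto
    then show "d \<in> (\<lambda>i. 2 * int i - M) ` {0..nat M}" by blast
  next
    fix t assume "t \<in> (\<lambda>i. 2 * int i - M) ` {0..nat M}"
    then obtain i where i: "i \<le> nat M" "t = 2 * int i - M" by auto
    have "even (f z - t)" for z
      using parity[of z z0] attained i by auto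
    moreover have "f z1 \<le> t" "t \<le> f z0" using i z1 attained bound[of z1] by auto
    ultimately show "t \<in> range f"
      using two_step_sequence_hits_between[of f t, OF step] by blast
  qed
qed

lemma card_range_two_step_symmetric:
  fixes f :: "nat \<Rightarrow> int"
  assumes step: "\<And>z. \<bar>f (Suc z) - f z\<bar> \<le> 2"
    and parity: "\<And>z z'. even (f z - f z')"
    and symmetric: "\<And>z. \<exists>z'. f z' = - f z"
    and bound: "\<And>z. f z \<le> M" and attained: "f z0 = M"
  shows "int (card (range f)) = M + 1"
proof -
  obtain z1 where "f z1 = - M" using symmetric[of z0] attained by auto
  then have "M \<ge> 0" using bound[of z1] by simp
  moreover have "inj_on (\<lambda>i. 2 * int i - M) {0..nat M}" by (rule inj_onI) simp
  ultimately show ?thesis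
    unfolding range_two_step_symmetric[OF assms] by (simp add: card_image)
qed

lemma card_quotient_kernel: "card (A // {(x, y). f x = f y}) = card (f ` A)"
proof -
  have "{(x, y). f x = f y} `` {x} = {y. f y = f x}" for x
    by auto
  then have "A // {(x, y). f x = f y} = (\<lambda>v. {y. f y = v}) ` f ` A"
    unfolding quotient_def image_image by (simp add: UNION_singleton_eq_range)
  moreover have "inj_on (\<lambda>v. {y. f y = v}) (f ` A)"
    by (rule inj_onI) auto
  ultimately show ?thesis by (simp add: card_image)
qed

lemma card_range_eq_if_same_fibres:
  assumes "\<And>x y. f x = f y \<longleftrightarrow> g x = g y"
  shows "card (range f) = card (range g)"
  using card_quotient_kernel[of UNIV f] card_quotient_kernel[of UNIV g] assms by simp

lemma length_eq_count_0_plus_count_1: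
  "set u \<subseteq> {0, 1} \<Longrightarrow> length u = count (mset u) (0::nat) + count (mset u) 1"
  by (induction u) auto

lemma mset_eq_iff_count_1_eq:
  fixes u v :: "nat list"
  assumes "set u \<subseteq> {0, 1}" "set v \<subseteq> {0, 1}" "length u = length v"
  shows "mset u = mset v \<longleftrightarrow> count (mset u) 1 = count (mset v) 1"
proof
  assume "count (mset u) 1 = count (mset v) 1"
  moreover have "count (mset u) 0 = count (mset v) 0"
    using calculation assms length_eq_count_0_plus_count_1 by (metis add_right_imp_eq)
  moreover have "count (mset u) a = count (mset v) a" if "a \<notin> {0, 1}" for a
    using that assms(1,2) by (metis count_mset_0_iff subsetD)
  ultimately show "mset u = mset v"
    by (intro multiset_eqI) (metis insertE singletonD)
qed simp

section \<open>Binary block counts and the paperfolding word\<close>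

text \<open>\<open>bit_runs n\<close> is the number of maximal blocks of equal digits in the binary
  expansion of \<open>n\<close>.\<close>
fun bit_runs :: "nat \<Rightarrow> nat" where
  "bit_runs n = (if n = 0 then 0 else bit_runs (n div 2) + of_bool (n div 2 mod 2 \<noteq> n mod 2))"

declare bit_runs.simps [simp del]

lemma bit_runs_0 [simp]: "bit_runs 0 = 0"
  by (simp add: bit_runs.simps)

lemma bit_runs_double_plus:
  assumes "a < 2"
  shows "bit_runs (2 * x + a) = bit_runs x + of_bool (x mod 2 \<noteq> a)"
  using assms by (cases "x = 0 \<and> a = 0") (auto simp: bit_runs.simps[of "2 * x + a"])

lemma bit_runs_small: "bit_runs (Suc 0) = 1" "bit_runs 2 = 2" "bit_runs 3 = 1" "bit_runs 4 = 2" "bit_runs 5 = 3"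
  using bit_runs_double_plus[of 1 0] bit_runs_double_plus[of 0 1] bit_runs_double_plus[of 1 1]
    bit_runs_double_plus[of 0 2] bit_runs_double_plus[of 1 2]
  by simp_all

declare oddpart.simps [simp del]

lemma paperfold_double: "m > 0 \<Longrightarrow> paperfold (2 * m) = paperfold m"
  unfolding paperfold_def by (subst oddpart.simps) simp

lemma paperfold_4_1: "paperfold (4 * m + 1) = 0"
  unfolding paperfold_def by (subst oddpart.simps) simp

lemma paperfold_4_3: "paperfold (4 * m + 3) = 1"
proof -
  have "odd (4 * m + 3)" by presburger
  then show ?thesis unfolding paperfold_def by (subst oddpart.simps) simp
qed

lemma paperfold_le_1: "paperfold j \<le> 1"
  unfolding paperfold_def by simp

definition pf_sign :: "nat \<Rightarrow> int" where
  "pf_sign j = 1 - 2 * int (paperfold j)"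

lemma bit_runs_Suc: "int (bit_runs (Suc j)) = int (bit_runs j) + pf_sign (Suc j)"
proof (induction j rule: less_induct)
  case (less j)
  obtain x a where j: "j = 2 * x + a" and "a < 2"
    by (metis div_mod_decomp mod_less_divisor mult.commute zero_less_numeral)
  show ?case
  proof (cases "a = 0")
    case True
    have "paperfold (Suc j) = of_bool (odd x)"
    proof (cases "even x")
      case True
      then have "Suc j = 4 * (x div 2) + 1" using j \<open>a = 0\<close> by presburger
      then show ?thesis using True by (simp only: paperfold_4_1) simp
    next
      case False
      then have "Suc j = 4 * (x div 2) + 3" using j \<open>a = 0\<close> by presburger
      then show ?thesis using False by (simp only: paperfold_4_3) simp
    qed
    then have "pf_sign (Suc j) = (if even x then 1 else -1)"
      unfolding pf_sign_def by simp
    moreover have "bit_runs (Suc j) = bit_runs (2 * x + 1)" and "bit_runs j = bit_runs (2 * x + 0)"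
      using j True by simp_all
    ultimately show ?thesis
      by (simp only: bit_runs_double_plus) (auto simp: odd_iff_mod_2_eq_one)
  next
    case False
    then have "a = 1" using \<open>a < 2\<close> by simp
    have "pf_sign (Suc j) = pf_sign (Suc x)"
      unfolding pf_sign_def j \<open>a = 1\<close> using paperfold_double[of "Suc x"] by simp
    moreover have "bit_runs (Suc j) = bit_runs (2 * Suc x + 0)" and "bit_runs j = bit_runs (2 * x + 1)"
      using j \<open>a = 1\<close> by simp_all
    moreover have "int (bit_runs (Suc x)) = int (bit_runs x) + pf_sign (Suc x)"
      using less.IH[of x] j \<open>a = 1\<close> by simp
    ultimately show ?thesis
      by (simp only: bit_runs_double_plus) (auto simp: odd_iff_mod_2_eq_one split: if_splits)
  qed
qed

lemma bit_runs_complement: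
  assumes "x < 2 ^ k"
  shows "bit_runs (2 ^ Suc k - 1 - x) = bit_runs x + 1"
  using assms
proof (induction k arbitrary: x)
  case 0
  then show ?case by (simp add: bit_runs.simps)
next
  case (Suc k)
  define a where "a = x mod 2"
  define y where "y = x div 2"
  have "a < 2" and x: "x = 2 * y + a" unfolding a_def y_def by simp_all
  have "y < 2 ^ k" using Suc.prems unfolding y_def by (simp add: less_mult_imp_div_less)
  define q where "q = 2 ^ Suc k - 1 - y"
  have complement: "2 ^ Suc (Suc k) - 1 - x = 2 * q + (1 - a)"
    unfolding q_def x using \<open>y < 2 ^ k\<close> \<open>a < 2\<close> by simp
  have "q + y + 1 = 2 * 2 ^ k" unfolding q_def using \<open>y < 2 ^ k\<close> by simp
  then have parity: "q mod 2 \<noteq> 1 - a \<longleftrightarrow> y mod 2 \<noteq> a" using \<open>a < 2\<close> by presburger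
  have "bit_runs (2 ^ Suc (Suc k) - 1 - x) = bit_runs q + of_bool (q mod 2 \<noteq> 1 - a)"
    unfolding complement by (rule bit_runs_double_plus) simp
  also have "\<dots> = bit_runs y + 1 + of_bool (y mod 2 \<noteq> a)"
    using Suc.IH[OF \<open>y < 2 ^ k\<close>] parity unfolding q_def by simp
  also have "\<dots> = bit_runs x + 1"
    unfolding x bit_runs_double_plus[OF \<open>a < 2\<close>] by simp
  finally show ?case .
qed

section \<open>Abelian complexity as the number of balances\<close>

definition pf_balance :: "nat \<Rightarrow> nat \<Rightarrow> int" where
  "pf_balance n z = int (bit_runs (z + n)) - int (bit_runs z)"

lemma pf_balance_eq_count_1:
  "pf_balance n z = int n - 2 * int (count (mset (pf_factor (Suc z) n)) 1)"
proof (induction n)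
  case 0
  then show ?case by (simp add: pf_balance_def pf_factor_def)
next
  case (Suc n)
  have "pf_factor (Suc z) (Suc n) = pf_factor (Suc z) n @ [paperfold (Suc (z + n))]"
    unfolding pf_factor_def by simp
  moreover have "paperfold (Suc (z + n)) = 0 \<or> paperfold (Suc (z + n)) = 1"
    using paperfold_le_1 le_Suc_eq by auto
  ultimately show ?case
    using Suc bit_runs_Suc[of "z + n"] by (auto simp: pf_balance_def pf_sign_def)
qed

lemma pf_balance_Suc_le: "\<bar>pf_balance n (Suc z) - pf_balance n z\<bar> \<le> 2"
proof -
  have "\<bar>pf_sign j\<bar> = 1" for j
    unfolding pf_sign_def using paperfold_le_1[of j] by (cases "paperfold j") auto
  then have "\<bar>pf_sign (Suc (z + n)) - pf_sign (Suc z)\<bar> \<le> 2"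
    using abs_triangle_ineq4[of "pf_sign (Suc (z + n))" "pf_sign (Suc z)"] by simp
  then show ?thesis
    unfolding pf_balance_def using bit_runs_Suc[of "z + n"] bit_runs_Suc[of z] by simp
qed

lemma even_pf_balance_diff: "even (pf_balance n z - pf_balance n z')"
  unfolding pf_balance_eq_count_1 by presburger

lemma pf_balance_symmetric: "\<exists>z'. pf_balance n z' = - pf_balance n z"
proof -
  define k where "k = z + n"
  have "z + n < 2 ^ k" unfolding k_def by (rule less_exp)
  define z' where "z' = 2 ^ Suc k - 1 - (z + n)"
  have "z' + n = 2 ^ Suc k - 1 - z" unfolding z'_def using \<open>z + n < 2 ^ k\<close> by simp
  then have "pf_balance n z' = - pf_balance n z"
    unfolding pf_balance_def z'_def
    using bit_runs_complement[of z k] bit_runs_complement[of "z + n" k] \<open>z + n < 2 ^ k\<close> by simp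
  then show ?thesis ..
qed

lemma pf_abelian_complexity_eq_card_balances:
  "pf_abelian_complexity n = card (range (pf_balance n))"
proof -
  define factor where "factor z = pf_factor (Suc z) n" for z
  have factors: "{pf_factor i n | i. i \<ge> 1} = range factor"
  proof (intro set_eqI iffI)
    fix u assume "u \<in> {pf_factor i n | i. i \<ge> 1}"
    then obtain i where "i \<ge> 1" "u = pf_factor i n" by blast
    then have "u = factor (i - 1)" unfolding factor_def by simp
    then show "u \<in> range factor" by blast
  qed (auto simp: factor_def)
  have "{(u, v). abelian_equiv u v} = {(u, v). mset u = mset (v :: nat list)}"
    unfolding abelian_equiv_def ..
  then have "pf_abelian_complexity n = card (range (\<lambda>z. mset (factor z)))"
    unfolding pf_abelian_complexity_def factors by (simp add: card_quotient_kernel image_comp)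
  also have "\<dots> = card (range (pf_balance n))"
  proof (rule card_range_eq_if_same_fibres)
    fix z z'
    have "set (factor z) \<subseteq> {0, 1}" for z
      unfolding factor_def pf_factor_def paperfold_def by auto
    moreover have "length (factor z) = length (factor z')"
      unfolding factor_def pf_factor_def by simp
    ultimately show "mset (factor z) = mset (factor z') \<longleftrightarrow> pf_balance n z = pf_balance n z'"
      unfolding pf_balance_eq_count_1 factor_def by (simp add: mset_eq_iff_count_1_eq)
  qed
  finally show ?thesis .
qed

section \<open>A max-plus automaton for the maximal balance\<close>

text \<open>In \<open>runs_gap z n c u v\<close>, \<open>c\<close> is a carry and \<open>u\<close>, \<open>v\<close> are the last binary digits of the
  two numbers whose block counts are compared; peeling off the last digits of \<open>z\<close> and \<open>n\<close>
  leads from one such triple \<open>(c, u, v)\<close> to another.\<close>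
definition runs_gap :: "nat \<Rightarrow> nat \<Rightarrow> nat \<Rightarrow> nat \<Rightarrow> nat \<Rightarrow> int" where
  "runs_gap z n c u v = int (bit_runs (2 * (z + n + c) + u)) - int (bit_runs (2 * z + v))"

lemma pf_balance_double_plus:
  assumes "a < 2" "b < 2"
  shows "pf_balance (2 * n + b) (2 * z + a) = runs_gap z n ((a + b) div 2) ((a + b) mod 2) a"
proof -
  have "2 * z + a + (2 * n + b) = 2 * (z + n + (a + b) div 2) + (a + b) mod 2" by simp
  then show ?thesis unfolding pf_balance_def runs_gap_def by (simp only: add.commute[of "2 * z + a"])
qed

lemma runs_gap_double_plus:
  assumes "a < 2" "u < 2" "v < 2"
  shows "runs_gap (2 * z + a) (2 * n + b) c u v = of_bool ((a + b + c) mod 2 \<noteq> u) - of_bool (a \<noteq> v)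
    + runs_gap z n ((a + b + c) div 2) ((a + b + c) mod 2) a"
proof -
  define N where "N = 2 * z + a + (2 * n + b) + c"
  have N: "N = 2 * (z + n + (a + b + c) div 2) + (a + b + c) mod 2" and "N mod 2 = (a + b + c) mod 2"
    unfolding N_def by presburger+
  have "bit_runs (2 * N + u) = bit_runs N + of_bool ((a + b + c) mod 2 \<noteq> u)"
    using bit_runs_double_plus[OF \<open>u < 2\<close>] \<open>N mod 2 = _\<close> by simp
  moreover have "bit_runs (2 * (2 * z + a) + v) = bit_runs (2 * z + a) + of_bool (a \<noteq> v)"
    using bit_runs_double_plus[OF \<open>v < 2\<close>, of "2 * z + a"] \<open>a < 2\<close> by simp
  ultimately show ?thesis
    unfolding runs_gap_def N_def[symmetric] by (simp add: N)
qed

text \<open>Entry \<open>4 c + 2 u + v\<close> of \<open>gap_max n\<close> is the maximum of \<open>runs_gap z n c u v\<close> over all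
  \<open>z\<close>; \<open>gap_step\<close> is the max-plus transition that maximises over the last digit of \<open>z\<close>.\<close>
definition gap_transition :: "int list \<Rightarrow> nat \<Rightarrow> nat \<Rightarrow> nat \<Rightarrow> nat \<Rightarrow> nat \<Rightarrow> int" where
  "gap_transition h b c u v a = of_bool ((a + b + c) mod 2 \<noteq> u) - of_bool (a \<noteq> v)
     + h ! (4 * ((a + b + c) div 2) + 2 * ((a + b + c) mod 2) + a)"

definition gap_step :: "nat \<Rightarrow> int list \<Rightarrow> int list" where
  "gap_step b h = (if b = 0
     then [max (h!0) (h!3), max (h!0 - 1) (h!3 + 1), max (h!0 + 1) (h!3 - 1), max (h!0) (h!3),
       max (h!2 + 1) (h!5 - 1), max (h!2) (h!5), max (h!2) (h!5), max (h!2 - 1) (h!5 + 1)]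
     else [max (h!2 + 1) (h!5 - 1), max (h!2) (h!5), max (h!2) (h!5), max (h!2 - 1) (h!5 + 1),
       max (h!4) (h!7), max (h!4 - 1) (h!7 + 1), max (h!4 + 1) (h!7 - 1), max (h!4) (h!7)])"

lemma gap_step_nth:
  assumes "b < 2" "c < 2" "u < 2" "v < 2"
  shows "gap_step b h ! (4 * c + 2 * u + v) = max (gap_transition h b c u v 0) (gap_transition h b c u v 1)"
  using assms unfolding less_2_cases_iff
  by (elim disjE; simp add: gap_step_def gap_transition_def ac_simps; simp add: eval_nat_numeral)

definition gap_init :: "int list" where
  "gap_init = [0, 1, 1, 0, 2, 1, 1, 2]"

lemma gap_step_0_gap_init: "gap_step 0 gap_init = gap_init"
  by (simp add: gap_step_def gap_init_def)

fun gap_max :: "nat \<Rightarrow> int list" where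
  "gap_max n = (if n = 0 then gap_init else gap_step (n mod 2) (gap_max (n div 2)))"

declare gap_max.simps [simp del]

lemma gap_max_double_plus: "b < 2 \<Longrightarrow> gap_max (2 * m + b) = gap_step b (gap_max m)"
  by (cases "m = 0 \<and> b = 0") (auto simp: gap_max.simps[of "2 * m + b"] gap_max.simps[of 0] gap_step_0_gap_init)

lemma runs_gap_0_0_le:
  assumes "c < 2" "u < 2" "v < 2"
  shows "runs_gap 0 0 c u v \<le> gap_init ! (4 * c + 2 * u + v)"
  using assms unfolding less_2_cases_iff
  by (elim disjE) (simp_all add: runs_gap_def gap_init_def bit_runs_small)

lemma runs_gap_0_attains:
  assumes "c < 2" "u < 2" "v < 2"
  shows "\<exists>z. runs_gap z 0 c u v = gap_init ! (4 * c + 2 * u + v)"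
proof -
  have "runs_gap 0 0 c u v = gap_init ! (4 * c + 2 * u + v) \<or> runs_gap 1 0 c u v = gap_init ! (4 * c + 2 * u + v)"
    using assms unfolding less_2_cases_iff
    by (elim disjE) (simp_all add: runs_gap_def gap_init_def bit_runs_small)
  then show ?thesis by blast
qed

lemma runs_gap_le_gap_max:
  assumes "c < 2" "u < 2" "v < 2"
  shows "runs_gap z n c u v \<le> gap_max n ! (4 * c + 2 * u + v)"
  using assms
proof (induction "z + n" arbitrary: z n c u v rule: less_induct)
  case less
  show ?case
  proof (cases "z = 0 \<and> n = 0")
    case True
    then show ?thesis using runs_gap_0_0_le[OF less.prems] by (simp add: gap_max.simps)
  next
    case False
    define a b where "a = z mod 2" and "b = n mod 2"
    have "a < 2" "b < 2" and z: "z = 2 * (z div 2) + a" and n: "n = 2 * (n div 2) + b"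
      unfolding a_def b_def by simp_all
    define c' where "c' = (a + b + c) div 2"
    define u' where "u' = (a + b + c) mod 2"
    have "c' < 2" "u' < 2" unfolding c'_def u'_def using \<open>a < 2\<close> \<open>b < 2\<close> \<open>c < 2\<close> by simp_all
    have "z div 2 + n div 2 < z + n" using False by auto
    then have IH: "runs_gap (z div 2) (n div 2) c' u' a \<le> gap_max (n div 2) ! (4 * c' + 2 * u' + a)"
      using less.hyps \<open>c' < 2\<close> \<open>u' < 2\<close> \<open>a < 2\<close> by blast
    have "runs_gap z n c u v = gap_transition (gap_max (n div 2)) b c u v a - gap_max (n div 2) ! (4 * c' + 2 * u' + a)
        + runs_gap (z div 2) (n div 2) c' u' a"
      using runs_gap_double_plus[OF \<open>a < 2\<close> less.prems(2,3), of "z div 2" "n div 2" b c] z n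
      unfolding gap_transition_def c'_def u'_def by simp
    also have "\<dots> \<le> gap_transition (gap_max (n div 2)) b c u v a"
      using IH by simp
    also have "\<dots> \<le> gap_step b (gap_max (n div 2)) ! (4 * c + 2 * u + v)"
      unfolding gap_step_nth[OF \<open>b < 2\<close> less.prems] using \<open>a < 2\<close> by (auto simp: less_2_cases_iff)
    also have "\<dots> = gap_max n ! (4 * c + 2 * u + v)"
      using gap_max_double_plus[OF \<open>b < 2\<close>, of "n div 2"] n by simp
    finally show ?thesis .
  qed
qed

lemma gap_max_attained:
  assumes "c < 2" "u < 2" "v < 2"
  shows "\<exists>z. runs_gap z n c u v = gap_max n ! (4 * c + 2 * u + v)"
  using assms
proof (induction n arbitrary: c u v rule: less_induct)
  case (less n)
  show ?case
  proof (cases "n = 0")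
    case True
    then show ?thesis using runs_gap_0_attains[OF less.prems] by (simp add: gap_max.simps)
  next
    case False
    define b where "b = n mod 2"
    have "b < 2" and n: "n = 2 * (n div 2) + b" unfolding b_def by simp_all
    define h where "h = gap_max (n div 2)"
    obtain a where "a < 2"
      and a: "max (gap_transition h b c u v 0) (gap_transition h b c u v 1) = gap_transition h b c u v a"
      by (cases "gap_transition h b c u v 0 \<le> gap_transition h b c u v 1")
        (auto simp: max_def intro: that[of 0] that[of 1])
    define c' where "c' = (a + b + c) div 2"
    define u' where "u' = (a + b + c) mod 2"
    have "c' < 2" "u' < 2" unfolding c'_def u'_def using \<open>a < 2\<close> \<open>b < 2\<close> \<open>c < 2\<close> by simp_all
    moreover have "n div 2 < n" using False by simp
    ultimately obtain z where z: "runs_gap z (n div 2) c' u' a = h ! (4 * c' + 2 * u' + a)"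
      using less.IH \<open>a < 2\<close> unfolding h_def by blast
    have "runs_gap (2 * z + a) n c u v = gap_transition h b c u v a"
      using runs_gap_double_plus[OF \<open>a < 2\<close> less.prems(2,3), of z "n div 2" b c] n z
      unfolding gap_transition_def c'_def u'_def by simp
    also have "\<dots> = gap_max n ! (4 * c + 2 * u + v)"
      using gap_max_double_plus[OF \<open>b < 2\<close>, of "n div 2"] gap_step_nth[OF \<open>b < 2\<close> less.prems] a n
      unfolding h_def by simp
    finally show ?thesis ..
  qed
qed

definition top_balance :: "int list \<Rightarrow> nat \<Rightarrow> int" where
  "top_balance h b = max (h ! (2 * b)) (h ! (3 + 2 * b))"

lemma top_balance_index:
  fixes a b :: nat
  assumes "a < 2" "b < 2"
  shows "4 * ((a + b) div 2) + 2 * ((a + b) mod 2) + a = (if a = 0 then 2 * b else 3 + 2 * b)"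
  using assms by (auto simp: less_2_cases_iff)

lemma pf_balance_le_top_balance: "pf_balance n z \<le> top_balance (gap_max (n div 2)) (n mod 2)"
proof -
  define a b where "a = z mod 2" and "b = n mod 2"
  have "a < 2" "b < 2" unfolding a_def b_def by simp_all
  have "pf_balance n z = runs_gap (z div 2) (n div 2) ((a + b) div 2) ((a + b) mod 2) a"
    using pf_balance_double_plus[OF \<open>a < 2\<close> \<open>b < 2\<close>, of "n div 2" "z div 2"]
    unfolding a_def b_def by simp
  also have "\<dots> \<le> gap_max (n div 2) ! (4 * ((a + b) div 2) + 2 * ((a + b) mod 2) + a)"
    by (rule runs_gap_le_gap_max) (use \<open>a < 2\<close> \<open>b < 2\<close> in simp_all)
  also have "\<dots> \<le> top_balance (gap_max (n div 2)) b"
    unfolding top_balance_index[OF \<open>a < 2\<close> \<open>b < 2\<close>] top_balance_def by simp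
  finally show ?thesis unfolding b_def .
qed

lemma top_balance_eq_entry:
  assumes "b < 2"
  shows "\<exists>a<2. top_balance h b = h ! (4 * ((a + b) div 2) + 2 * ((a + b) mod 2) + a)"
proof (cases "h ! (2 * b) \<le> h ! (3 + 2 * b)")
  case True
  then show ?thesis
    using assms top_balance_index[of 1 b] by (intro exI[of _ 1]) (simp add: top_balance_def numeral_3_eq_3)
next
  case False
  then show ?thesis
    using assms by (intro exI[of _ 0]) (simp add: top_balance_index[OF _ assms] top_balance_def)
qed

lemma top_balance_attained: "\<exists>z. pf_balance n z = top_balance (gap_max (n div 2)) (n mod 2)"
proof -
  define b where "b = n mod 2"
  have "b < 2" unfolding b_def by simp
  then obtain a where "a < 2" and a: "top_balance (gap_max (n div 2)) b
      = gap_max (n div 2) ! (4 * ((a + b) div 2) + 2 * ((a + b) mod 2) + a)"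
    using top_balance_eq_entry by blast
  moreover obtain y where "runs_gap y (n div 2) ((a + b) div 2) ((a + b) mod 2) a
      = gap_max (n div 2) ! (4 * ((a + b) div 2) + 2 * ((a + b) mod 2) + a)"
    using gap_max_attained \<open>a < 2\<close> \<open>b < 2\<close> by fastforce
  ultimately have "pf_balance n (2 * y + a) = top_balance (gap_max (n div 2)) b"
    using pf_balance_double_plus[OF \<open>a < 2\<close> \<open>b < 2\<close>, of "n div 2" y] unfolding b_def by simp
  then show ?thesis unfolding b_def ..
qed

lemma pf_abelian_complexity_eq_top_balance:
  "int (pf_abelian_complexity n) = top_balance (gap_max (n div 2)) (n mod 2) + 1"
proof -
  obtain z0 where "pf_balance n z0 = top_balance (gap_max (n div 2)) (n mod 2)"
    using top_balance_attained ..
  then show ?thesis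
    unfolding pf_abelian_complexity_eq_card_balances
    by (rule card_range_two_step_symmetric[OF pf_balance_Suc_le even_pf_balance_diff
          pf_balance_symmetric pf_balance_le_top_balance])
qed

section \<open>Finitely many states up to translation\<close>

definition normalize_offset :: "int list \<Rightarrow> int list" where
  "normalize_offset h = map (\<lambda>x. x - h ! 0) h"

text \<open>The state vectors \<open>gap_max n\<close>, translated to start with \<open>0\<close>.\<close>
definition gap_orbit :: "int list list" where
  "gap_orbit = [[0, 1, 1, 0, 2, 1, 1, 2], [0, -1, -1, 0, 0, 1, 1, 0], [0, 1, 1, 0, 0, 1, 1, 2],
    [0, 1, 1, 2, 0, 1, 1, 0], [0, 1, -1, 0, 0, -1, -1, 0], [0, -1, -1, 0, -2, -1, -1, -2],
    [0, 1, 1, 0, 0, -1, -1, 0], [0, 1, 1, 0, 2, 1, 1, 0], [0, -1, -1, -2, -2, -1, -1, -2],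
    [0, -1, 1, 0, 0, -1, -1, 0], [0, -1, -1, 0, 0, -1, 1, 0], [0, -1, -1, 0, 0, 1, -1, 0]]"

lemma gap_orbit_closed:
  assumes "d \<in> set gap_orbit" "b < 2"
  shows "normalize_offset (gap_step b d) \<in> set gap_orbit"
proof -
  have "\<forall>d\<in>set gap_orbit. normalize_offset (gap_step 0 d) \<in> set gap_orbit
      \<and> normalize_offset (gap_step 1 d) \<in> set gap_orbit"
    unfolding gap_orbit_def gap_step_def
    by (simp add: normalize_offset_def)
  then show ?thesis using assms by (auto simp: less_2_cases_iff)
qed

lemma length_gap_step [simp]: "length (gap_step b h) = 8"
  by (simp add: gap_step_def)

lemma gap_step_shift:
  assumes "b < 2" "length h = 8"
  shows "gap_step b (map (\<lambda>x. x + k) h) = map (\<lambda>x. x + k) (gap_step b h)"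
proof -
  have "b = 0 \<or> b = 1" using assms(1) by auto
  then show ?thesis
    using assms(2) by (elim disjE) (simp_all add: gap_step_def max_def)
qed

lemma gap_max_in_orbit: "\<exists>k. \<exists>d\<in>set gap_orbit. gap_max n = map (\<lambda>x. x + k) d"
proof (induction n rule: less_induct)
  case (less n)
  show ?case
  proof (cases "n = 0")
    case True
    then show ?thesis
      by (intro exI[of _ 0] bexI[of _ gap_init]) (simp_all add: gap_max.simps gap_init_def gap_orbit_def)
  next
    case False
    then obtain k d where d: "d \<in> set gap_orbit" and k: "gap_max (n div 2) = map (\<lambda>x. x + k) d"
      using less.IH[of "n div 2"] by auto
    define s where "s = gap_step (n mod 2) d"
    have "length d = 8" using d unfolding gap_orbit_def by auto
    have "gap_max n = map (\<lambda>x. x + k) s"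
      using gap_max_double_plus[of "n mod 2" "n div 2"] gap_step_shift[OF _ \<open>length d = 8\<close>]
      unfolding k s_def by simp
    also have "\<dots> = map (\<lambda>x. x + (k + s ! 0)) (normalize_offset s)"
      by (simp add: normalize_offset_def)
    finally show ?thesis
      using gap_orbit_closed[OF d, of "n mod 2"] unfolding s_def by auto
  qed
qed

definition bits_value :: "nat list \<Rightarrow> nat \<Rightarrow> nat" where
  "bits_value bs n = foldl (\<lambda>x b. 2 * x + b) n bs"

definition gap_run :: "nat list \<Rightarrow> int list \<Rightarrow> int list" where
  "gap_run bs h = foldl (\<lambda>h b. gap_step b h) h bs"

lemma gap_max_bits_value:
  "\<forall>b\<in>set bs. b < 2 \<Longrightarrow> gap_max (bits_value bs n) = gap_run bs (gap_max n)"
  by (induction bs rule: rev_induct) (simp_all add: bits_value_def gap_run_def gap_max_double_plus)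

lemma gap_run_shift:
  assumes "\<forall>b\<in>set bs. b < 2" "length h = 8"
  shows "gap_run bs (map (\<lambda>x. x + k) h) = map (\<lambda>x. x + k) (gap_run bs h)"
  using assms
proof (induction bs rule: rev_induct)
  case Nil
  then show ?case by (simp add: gap_run_def)
next
  case (snoc b bs)
  have "length (gap_run bs h) = 8"
    using snoc.prems by (cases bs rule: rev_exhaust) (simp_all add: gap_run_def)
  then show ?case using snoc gap_step_shift by (simp add: gap_run_def)
qed

lemma top_balance_shift:
  "b < 2 \<Longrightarrow> length h = 8 \<Longrightarrow> top_balance (map (\<lambda>x. x + k) h) b = top_balance h b + k"
  by (auto simp: top_balance_def less_2_cases_iff)

lemma pf_abelian_complexity_bits_value:
  assumes "\<forall>x\<in>set bs. x < 2" "b < 2"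
  shows "int (pf_abelian_complexity (2 * bits_value bs n + b)) = top_balance (gap_run bs (gap_max n)) b + 1"
  using pf_abelian_complexity_eq_top_balance[of "2 * bits_value bs n + b"] gap_max_bits_value[OF assms(1)] assms(2)
  by simp

lemma pf_abelian_complexity_relation_from_orbit:
  assumes "\<forall>x\<in>set bs. x < 2" "\<forall>x\<in>set bs'. x < 2" "b < 2" "b' < 2"
    and orbit: "\<forall>d\<in>set gap_orbit. top_balance (gap_run bs d) b = top_balance (gap_run bs' d) b' + j"
  shows "int (pf_abelian_complexity (2 * bits_value bs n + b))
    = int (pf_abelian_complexity (2 * bits_value bs' n + b')) + j"
proof -
  obtain k d where d: "d \<in> set gap_orbit" and k: "gap_max n = map (\<lambda>x. x + k) d"
    using gap_max_in_orbit by blast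
  have "length d = 8" using d unfolding gap_orbit_def by auto
  have "length (gap_run cs d) = 8" if "\<forall>x\<in>set cs. x < 2" for cs
    using \<open>length d = 8\<close> by (cases cs rule: rev_exhaust) (simp_all add: gap_run_def)
  then show ?thesis
    using orbit d assms(1-4) \<open>length d = 8\<close>
    unfolding pf_abelian_complexity_bits_value[OF assms(1,3)] pf_abelian_complexity_bits_value[OF assms(2,4)] k
    by (simp add: gap_run_shift top_balance_shift)
qed

section \<open>Recurrences and regularity\<close>

lemma gap_orbit_top_balance_relations:
  "\<forall>d\<in>set gap_orbit. top_balance (gap_run [0] d) 0 = top_balance (gap_run [] d) 0 + 0"
  "\<forall>d\<in>set gap_orbit. top_balance (gap_run [1] d) 0 = top_balance (gap_run [] d) 1 + 1"
  "\<forall>d\<in>set gap_orbit. top_balance (gap_run [0, 0] d) 1 = top_balance (gap_run [] d) 0 + 1"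
  "\<forall>d\<in>set gap_orbit. top_balance (gap_run [0, 0, 1] d) 1 = top_balance (gap_run [] d) 1 + 2"
  "\<forall>d\<in>set gap_orbit. top_balance (gap_run [0, 1, 0] d) 1 = top_balance (gap_run [0] d) 1 + 2"
  "\<forall>d\<in>set gap_orbit. top_balance (gap_run [0, 1, 1] d) 1 = top_balance (gap_run [] d) 1 + 2"
  "\<forall>d\<in>set gap_orbit. top_balance (gap_run [1, 0, 1] d) 1 = top_balance (gap_run [1] d) 1 + 2"
  "\<forall>d\<in>set gap_orbit. top_balance (gap_run [1, 1, 0] d) 1 = top_balance (gap_run [] d) 1 + 2"
  "\<forall>d\<in>set gap_orbit. top_balance (gap_run [1, 1, 1] d) 1 = top_balance (gap_run [1, 1] d) 1 + 0"
  unfolding gap_orbit_def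
  by (simp only: list.set ball_simps; simp add: top_balance_def gap_run_def gap_step_def)+

lemma pf_abelian_complexity_recurrences:
  defines "\<rho> m \<equiv> int (pf_abelian_complexity m)"
  shows "\<rho> (4 * n) = \<rho> (2 * n)"
    and "\<rho> (4 * n + 2) = \<rho> (2 * n + 1) + 1"
    and "\<rho> (8 * n + 1) = \<rho> (2 * n) + 1"
    and "\<rho> (16 * n + 3) = \<rho> (2 * n + 1) + 2"
    and "\<rho> (16 * n + 5) = \<rho> (4 * n + 1) + 2"
    and "\<rho> (16 * n + 7) = \<rho> (2 * n + 1) + 2"
    and "\<rho> (16 * n + 11) = \<rho> (4 * n + 3) + 2"
    and "\<rho> (16 * n + 13) = \<rho> (2 * n + 1) + 2"
    and "\<rho> (16 * n + 15) = \<rho> (8 * n + 7)"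
proof -
  have relation: "\<rho> m = \<rho> m' + j"
    if "\<forall>d\<in>set gap_orbit. top_balance (gap_run bs d) b = top_balance (gap_run bs' d) b' + j"
      and "m = 2 * bits_value bs n + b" "m' = 2 * bits_value bs' n + b'"
      and "\<forall>x\<in>set bs. x < 2" "\<forall>x\<in>set bs'. x < 2" "b < 2" "b' < 2"
    for m m' bs bs' b b' j
    using pf_abelian_complexity_relation_from_orbit[OF that(4-7,1)] unfolding \<rho>_def that(2,3) .
  note relations = gap_orbit_top_balance_relations[THEN relation]
  show "\<rho> (4 * n) = \<rho> (2 * n)"
    by (rule relations(1)[simplified add_0_right]) (simp_all add: bits_value_def)
  show "\<rho> (4 * n + 2) = \<rho> (2 * n + 1) + 1"
    by (rule relations(2)) (simp_all add: bits_value_def)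
  show "\<rho> (8 * n + 1) = \<rho> (2 * n) + 1"
    by (rule relations(3)) (simp_all add: bits_value_def)
  show "\<rho> (16 * n + 3) = \<rho> (2 * n + 1) + 2"
    by (rule relations(4)) (simp_all add: bits_value_def)
  show "\<rho> (16 * n + 5) = \<rho> (4 * n + 1) + 2"
    by (rule relations(5)) (simp_all add: bits_value_def)
  show "\<rho> (16 * n + 7) = \<rho> (2 * n + 1) + 2"
    by (rule relations(6)) (simp_all add: bits_value_def)
  show "\<rho> (16 * n + 11) = \<rho> (4 * n + 3) + 2"
    by (rule relations(7)) (simp_all add: bits_value_def)
  show "\<rho> (16 * n + 13) = \<rho> (2 * n + 1) + 2"
    by (rule relations(8)) (simp_all add: bits_value_def)
  show "\<rho> (16 * n + 15) = \<rho> (8 * n + 7)"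
    by (rule relations(9)[simplified add_0_right]) (simp_all add: bits_value_def)
qed

lemma pf_abelian_complexity_kernel_closed:
  defines "w n \<equiv> int (pf_abelian_complexity n)"
    and "P \<equiv> {(0, 0), (1, 0), (1, 1), (2, 1), (2, 3), (3, 3), (3, 5), (3, 7)} :: (nat \<times> nat) set"
  assumes "(e, c) \<in> P" "b < 2"
  shows "\<exists>e' c'. (e', c') \<in> P \<and> differ_by_constant (\<lambda>n. w (2 ^ Suc e * n + (2 ^ e * b + c))) (\<lambda>n. w (2 ^ e' * n + c'))"
proof -
  note rec = pf_abelian_complexity_recurrences[folded w_def]
  have "differ_by_constant (\<lambda>n. w (4 * n)) (\<lambda>n. w (2 * n))"
    and "differ_by_constant (\<lambda>n. w (4 * n + 2)) (\<lambda>n. w (2 * n + 1))"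
    and "differ_by_constant (\<lambda>n. w (8 * n + 1)) (\<lambda>n. w (2 * n))"
    and "differ_by_constant (\<lambda>n. w (16 * n + 3)) (\<lambda>n. w (2 * n + 1))"
    and "differ_by_constant (\<lambda>n. w (16 * n + 5)) (\<lambda>n. w (4 * n + 1))"
    and "differ_by_constant (\<lambda>n. w (16 * n + 7)) (\<lambda>n. w (2 * n + 1))"
    and "differ_by_constant (\<lambda>n. w (16 * n + 11)) (\<lambda>n. w (4 * n + 3))"
    and "differ_by_constant (\<lambda>n. w (16 * n + 13)) (\<lambda>n. w (2 * n + 1))"
    and "differ_by_constant (\<lambda>n. w (16 * n + 15)) (\<lambda>n. w (8 * n + 7))"
    unfolding differ_by_constant_def using rec by (metis add_0_right)+
  moreover have "e = 0 \<and> c = 0 \<or> e = 1 \<and> c = 0 \<or> e = 1 \<and> c = 1 \<or> e = 2 \<and> c = 1 \<or> e = 2 \<and> c = 3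
      \<or> e = 3 \<and> c = 3 \<or> e = 3 \<and> c = 5 \<or> e = 3 \<and> c = 7"
    using assms(3) unfolding P_def by simp
  moreover have "b = 0 \<or> b = 1" using assms(4) by auto
  ultimately show ?thesis
    unfolding P_def by (elim disjE conjE; simp add: conj_disj_distribR ex_disj_distrib)
qed

theorem theorem1:
  shows "k_regular 2 (\<lambda>n. int (pf_abelian_complexity n))"
  by (rule k_regular_if_kernel_closed_up_to_constants[OF _ _ _ pf_abelian_complexity_kernel_closed])
    auto

end
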